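(* Let $\alpha\in(0,1)$ be irrational with continued fraction expansion $\alpha=[a_1,a_2,a_3,\dots]$ and let $(\mathbb X_\alpha,S)$ be the Sturmian subshift of slope $\alpha$. Let $(\mathbb X',S')$ be a $p$-periodic subshift over a finite alphabet, $T=S\times S'$, $\rho$ a $T$-ergodic probability measure on $\mathbb X_\alpha\times\mathbb X'$, and $f:\mathbb X_\alpha\times\mathbb X'\to\mathbb R$ locally constant, i.e. $f(x,x')=g(x_n\cdots x_{n+k-1},x')$ for some $n,k,g$. If $\limsup_{n\to\infty}a_n\ge 4p$, then for $\rho$-almost every $\omega$, $H_\omega=\Delta+V_\omega$ with $V_\omega(j)=f(T^j\omega)$ has no eigenvalues.
   Context: $\Delta$ is the discrete Laplacian $(\Delta\psi)(n)=\psi(n+1)+\psi(n-1)$. For $\theta\in[0,1)$, $s_n(\alpha,\theta)=\chi_{[1-\alpha,1)}(n\alpha+\theta\bmod1)$ and $s'_n(\alpha,\theta)=\chi_{(1-\alpha,1]}(n\alpha+\theta\bmod 1)$; $\mathbb X_\alpha=\{s(\alpha,\theta)\}_\theta\cup\{s'(\alpha,\theta)\}_\theta\subseteq\{0,1\}^{\mathbb Z}$ with left shift $S$. $\alpha=1/(a_1+1/(a_2+\cdots))$. A $p$-periodic subshift is the set of translates of one $p$-periodic sequence. *)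

theory Defs
  imports "HOL-Probability.Probability"
begin

(* x mod 1 with values in [0,1): frac x.  x mod 1 with values in (0,1]: *)
definition mod1_up :: "real \<Rightarrow> real" where
  "mod1_up x = x - of_int (\<lceil>x\<rceil> - 1)"

definition sturm_s :: "real \<Rightarrow> real \<Rightarrow> int \<Rightarrow> nat" where
  "sturm_s \<alpha> \<theta> n = (if frac (of_int n * \<alpha> + \<theta>) \<in> {1 - \<alpha>..<1} then 1 else 0)"

definition sturm_s' :: "real \<Rightarrow> real \<Rightarrow> int \<Rightarrow> nat" where
  "sturm_s' \<alpha> \<theta> n = (if mod1_up (of_int n * \<alpha> + \<theta>) \<in> {1 - \<alpha><..1} then 1 else 0)"

definition sturmian_subshift :: "real \<Rightarrow> (int \<Rightarrow> nat) set" where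
  "sturmian_subshift \<alpha> =
     (sturm_s \<alpha>) ` {0..<1} \<union> (sturm_s' \<alpha>) ` {0..<1}"

definition shiftZ :: "int \<Rightarrow> (int \<Rightarrow> 'a) \<Rightarrow> (int \<Rightarrow> 'a)" where
  "shiftZ j x = (\<lambda>n. x (n + j))"

definition orbit_subshift :: "(int \<Rightarrow> 'a) \<Rightarrow> (int \<Rightarrow> 'a) set" where
  "orbit_subshift y = range (\<lambda>k. shiftZ k y)"

definition prodshift :: "int \<Rightarrow> (int \<Rightarrow> 'a) \<times> (int \<Rightarrow> 'b) \<Rightarrow> (int \<Rightarrow> 'a) \<times> (int \<Rightarrow> 'b)" where
  "prodshift j \<omega> = (shiftZ j (fst \<omega>), shiftZ j (snd \<omega>))"

(* product (cylinder = Borel, alphabets discrete) sigma algebra on A^Z x B^Z *)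
definition seq_pair_space :: "((int \<Rightarrow> nat) \<times> (int \<Rightarrow> 'b)) measure" where
  "seq_pair_space =
     (PiM UNIV (\<lambda>_::int. count_space (UNIV::nat set)))
       \<Otimes>\<^sub>M (PiM UNIV (\<lambda>_::int. count_space (UNIV::'b set)))"

definition ergodic_measure :: "'a measure \<Rightarrow> ('a \<Rightarrow> 'a) \<Rightarrow> bool" where
  "ergodic_measure M T \<longleftrightarrow>
     prob_space M \<and> T \<in> measurable M M \<and>
     (\<forall>A \<in> sets M. emeasure M (T -` A \<inter> space M) = emeasure M A) \<and>
     (\<forall>A \<in> sets M. T -` A \<inter> space M = A \<longrightarrow> emeasure M A = 0 \<or> emeasure M A = 1)"

(* continued fraction digits: cf_digit alpha n = a_(n+1) for alpha = [a_1,a_2,...] *)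
definition gauss_iter :: "real \<Rightarrow> nat \<Rightarrow> real" where
  "gauss_iter \<alpha> n = ((\<lambda>x. frac (1 / x)) ^^ n) \<alpha>"

definition cf_digit :: "real \<Rightarrow> nat \<Rightarrow> nat" where
  "cf_digit \<alpha> n = nat \<lfloor>1 / gauss_iter \<alpha> n\<rfloor>"

definition has_eigenvalue :: "(int \<Rightarrow> real) \<Rightarrow> bool" where
  "has_eigenvalue V \<longleftrightarrow>
     (\<exists>(E::complex) (\<psi>::int \<Rightarrow> complex).
        \<psi> \<noteq> (\<lambda>_. 0) \<and> (\<lambda>n. (cmod (\<psi> n))\<^sup>2) summable_on UNIV \<and>
        (\<forall>n. \<psi> (n + 1) + \<psi> (n - 1) + of_real (V n) * \<psi> n = E * \<psi> n))"

end

theory Submission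
  imports Defs
begin

text \<open>
  Gordon's lemma: if for arbitrarily large \<open>Q\<close> the potential repeats a block of length \<open>Q\<close>
  three times around the origin, then \<open>\<Delta> + V\<close> has no \<open>\<ell>\<^sup>2\<close> eigenfunction, because by
  Cayley-Hamilton for the unimodular transfer matrix over one block the values of a solution
  near \<open>0\<close> are bounded by its values at distance \<open>Q\<close> and \<open>2 Q\<close>.

  For a Sturmian sequence and a continued fraction denominator \<open>q\<^sub>n\<close> of its slope, the defects
  \<open>x\<^sub>m \<noteq> x\<^sub>m\<^sub>+\<^sub>q\<^sub>n\<close> form clusters of diameter at most 1 that are at least
  \<open>q\<^sub>n\<^sub>+\<^sub>1 - 1 \<ge> a\<^sub>n\<^sub>+\<^sub>1 q\<^sub>n - 1\<close> apart, by the best approximation property of \<open>q\<^sub>n\<close>.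
  If \<open>a\<^sub>n\<^sub>+\<^sub>1 \<ge> 4 p\<close>, a proportion of at least \<open>1/(4 p)\<close> of any \<open>2 p q\<^sub>n\<close> consecutive
  shifts sees no defect in a window of length about \<open>3 p q\<^sub>n\<close>, and then the potential, whose
  second factor is \<open>p\<close>-periodic, repeats with period \<open>p q\<^sub>n\<close> as required by Gordon's lemma.
  By invariance of \<open>\<rho>\<close>, such a repetition at the origin has probability at least \<open>1/(4 p)\<close> for
  infinitely many \<open>n\<close>; so with positive probability it occurs for infinitely many \<open>n\<close>, and by
  ergodicity almost every orbit contains such a point. Having an eigenvalue is shift invariant.
\<close>

lemma shiftZ_shiftZ: "shiftZ i (shiftZ j x) = shiftZ (i + j) x"
  by (simp add: shiftZ_def add_ac)

lemma prodshift_prodshift: "prodshift i (prodshift j \<omega>) = prodshift (i + j) \<omega>"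
  by (simp add: prodshift_def shiftZ_shiftZ)

lemma prodshift_0 [simp]: "prodshift 0 \<omega> = \<omega>"
  by (simp add: prodshift_def shiftZ_def)

lemma funpow_prodshift_1: "(prodshift 1 ^^ i) \<omega> = prodshift (int i) \<omega>"
  by (induction i) (simp_all add: prodshift_prodshift add.commute)

lemma orbit_subshift_shiftZ: "x \<in> orbit_subshift y \<Longrightarrow> shiftZ j x \<in> orbit_subshift y"
  by (auto simp: orbit_subshift_def shiftZ_shiftZ)

lemma orbit_subshift_periodic:
  assumes "\<forall>n. y (n + int p) = y n" and "x \<in> orbit_subshift y"
  shows "x (m + int p) = x m"
  using assms by (auto simp: orbit_subshift_def shiftZ_def) (metis add.assoc add.commute)

section \<open>Continued fractions\<close>

lemma gauss_iter_Suc: "gauss_iter \<alpha> (Suc n) = frac (1 / gauss_iter \<alpha> n)"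
  by (simp add: gauss_iter_def)

lemma frac_irrational:
  assumes "x \<notin> \<rat>"
  shows "frac x \<notin> \<rat>"
  using assms Rats_add[of "frac x" "of_int \<lfloor>x\<rfloor>"] by (auto simp: frac_def)

lemma short_combination_coeff_bound:
  fixes u v q q' :: int and x :: real
  assumes "u * q + v * q' \<noteq> 0" and "\<bar>u * q + v * q'\<bar> < q'" and "0 \<le> q" and "0 < x"
  shows "1 \<le> \<bar>u - v * x\<bar>"
proof -
  have "0 < q'"
    using assms(2) by linarith
  consider "v = 0" | "0 < v" | "v < 0"
    by linarith
  then show ?thesis
  proof cases
    case 1
    with assms(1) have "1 \<le> \<bar>u\<bar>"
      by auto
    with 1 show ?thesis
      by (metis diff_zero mult_zero_left of_int_0 of_int_1_le_iff of_int_abs)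
  next
    case 2
    with \<open>0 < q'\<close> have "q' \<le> v * q'"
      by simp
    have "u < 0"
    proof (rule ccontr)
      assume "\<not> u < 0"
      with assms(3) have "0 \<le> u * q"
        by simp
      with \<open>q' \<le> v * q'\<close> assms(2) show False
        by linarith
    qed
    then have "of_int u \<le> (-1 :: real)"
      by simp
    moreover have "0 \<le> of_int v * x"
      using 2 assms(4) by simp
    ultimately show ?thesis
      by linarith
  next
    case 3
    with \<open>0 < q'\<close> have "v * q' \<le> - q'"
      using mult_right_mono[of v "-1" q'] by simp
    have "0 < u"
    proof (rule ccontr)
      assume "\<not> 0 < u"
      with assms(3) have "u * q \<le> 0"
        by (simp add: mult_nonpos_nonneg)
      with \<open>v * q' \<le> - q'\<close> assms(2) show False
        by linarith
    qed
    then have "(1 :: real) \<le> of_int u"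
      by simp
    moreover have "of_int v * x \<le> 0"
      using 3 assms(4) by (simp add: mult_nonpos_nonneg)
    ultimately show ?thesis
      by linarith
  qed
qed

text \<open>Convergents \<open>p\<^sub>n / q\<^sub>n\<close> of \<open>\<alpha> = [a\<^sub>1, a\<^sub>2, \<dots>]\<close>; note that \<open>a\<^sub>n\<^sub>+\<^sub>1 = cf_digit \<alpha> n\<close>.\<close>

fun cf_den :: "real \<Rightarrow> nat \<Rightarrow> int" where
  "cf_den \<alpha> 0 = 1"
| "cf_den \<alpha> (Suc 0) = cf_digit \<alpha> 0"
| "cf_den \<alpha> (Suc (Suc n)) = cf_digit \<alpha> (Suc n) * cf_den \<alpha> (Suc n) + cf_den \<alpha> n"

fun cf_num :: "real \<Rightarrow> nat \<Rightarrow> int" where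
  "cf_num \<alpha> 0 = 0"
| "cf_num \<alpha> (Suc 0) = 1"
| "cf_num \<alpha> (Suc (Suc n)) = cf_digit \<alpha> (Suc n) * cf_num \<alpha> (Suc n) + cf_num \<alpha> n"

definition cf_err :: "real \<Rightarrow> nat \<Rightarrow> real" where
  "cf_err \<alpha> n = of_int (cf_den \<alpha> n) * \<alpha> - of_int (cf_num \<alpha> n)"

lemma cf_den_num_det: "cf_den \<alpha> (Suc n) * cf_num \<alpha> n - cf_num \<alpha> (Suc n) * cf_den \<alpha> n = (-1) ^ Suc n"
proof (induction n)
  case (Suc n)
  have "cf_den \<alpha> (Suc (Suc n)) * cf_num \<alpha> (Suc n) - cf_num \<alpha> (Suc (Suc n)) * cf_den \<alpha> (Suc n)
        = - (cf_den \<alpha> (Suc n) * cf_num \<alpha> n - cf_num \<alpha> (Suc n) * cf_den \<alpha> n)"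
    by (simp add: algebra_simps)
  with Suc show ?case by simp
qed simp

context
  fixes \<alpha> :: real
  assumes \<alpha>_pos: "0 < \<alpha>" and \<alpha>_lt_1: "\<alpha> < 1" and \<alpha>_irrational: "\<alpha> \<notin> \<rat>"
begin

lemma gauss_iter_bounds: "0 < gauss_iter \<alpha> n \<and> gauss_iter \<alpha> n < 1 \<and> gauss_iter \<alpha> n \<notin> \<rat>"
proof (induction n)
  case 0
  then show ?case using \<alpha>_pos \<alpha>_lt_1 \<alpha>_irrational by (simp add: gauss_iter_def)
next
  case (Suc n)
  then have "1 / gauss_iter \<alpha> n \<notin> \<rat>"
    using Rats_divide[OF Rats_1, of "1 / gauss_iter \<alpha> n"] by auto
  then have "frac (1 / gauss_iter \<alpha> n) \<notin> \<rat>"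
    by (rule frac_irrational)
  moreover from this have "frac (1 / gauss_iter \<alpha> n) \<noteq> 0"
    by (metis Rats_0)
  ultimately show ?case
    using frac_lt_1[of "1 / gauss_iter \<alpha> n"] by (simp add: gauss_iter_Suc order_less_le)
qed

lemma cf_digit_pos: "0 < cf_digit \<alpha> n"
proof -
  have "1 < 1 / gauss_iter \<alpha> n"
    using gauss_iter_bounds[of n] by simp
  then show ?thesis
    unfolding cf_digit_def by linarith
qed

lemma gauss_iter_Suc_eq: "gauss_iter \<alpha> (Suc n) = 1 / gauss_iter \<alpha> n - cf_digit \<alpha> n"
proof -
  have "0 \<le> \<lfloor>1 / gauss_iter \<alpha> n\<rfloor>"
    using gauss_iter_bounds[of n] by simp
  then show ?thesis
    by (simp add: gauss_iter_Suc cf_digit_def frac_def)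
qed

lemma cf_den_ge: "int n \<le> cf_den \<alpha> n \<and> 1 \<le> cf_den \<alpha> n"
proof (induction n rule: induct_nat_012)
  case (ge2 n)
  have "cf_den \<alpha> (Suc n) \<le> cf_digit \<alpha> (Suc n) * cf_den \<alpha> (Suc n)"
    using ge2 cf_digit_pos[of "Suc n"] by simp
  with ge2 show ?case by (simp, linarith)
qed (simp_all add: Suc_le_eq cf_digit_pos)

lemma cf_den_Suc_ge: "cf_digit \<alpha> n * cf_den \<alpha> n \<le> cf_den \<alpha> (Suc n)"
proof (cases n)
  case (Suc m)
  with cf_den_ge[of m] show ?thesis by simp
qed simp

lemma cf_err_Suc: "cf_err \<alpha> (Suc n) = - gauss_iter \<alpha> (Suc n) * cf_err \<alpha> n"
proof (induction n)
  case 0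
  have "gauss_iter \<alpha> 1 = 1 / \<alpha> - cf_digit \<alpha> 0"
    using gauss_iter_Suc_eq[of 0] by (simp add: gauss_iter_def)
  with \<alpha>_pos show ?case
    by (simp add: cf_err_def field_simps)
next
  case (Suc n)
  let ?x = "gauss_iter \<alpha> (Suc n)" and ?a = "real (cf_digit \<alpha> (Suc n))"
  have "?x \<noteq> 0"
    using gauss_iter_bounds[of "Suc n"] by simp
  have "cf_err \<alpha> (Suc (Suc n)) = ?a * cf_err \<alpha> (Suc n) + cf_err \<alpha> n"
    by (simp add: cf_err_def algebra_simps)
  also have "\<dots> = - (1 / ?x - ?a) * cf_err \<alpha> (Suc n)"
    using Suc \<open>?x \<noteq> 0\<close> by (simp add: field_simps)
  finally show ?case
    by (simp add: gauss_iter_Suc_eq)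
qed

lemma cf_best_approx:
  fixes d e :: int
  assumes "d \<noteq> 0" and "\<bar>d\<bar> < cf_den \<alpha> (Suc n)"
  shows "\<bar>cf_err \<alpha> n\<bar> \<le> \<bar>d * \<alpha> - e\<bar>"
proof -
  define q q' p p' where "q = cf_den \<alpha> n" and "q' = cf_den \<alpha> (Suc n)"
    and "p = cf_num \<alpha> n" and "p' = cf_num \<alpha> (Suc n)"
  define \<delta> :: int where "\<delta> = (-1) ^ Suc n"
  have det: "q' * p - p' * q = \<delta>" and "\<delta> * \<delta> = 1"
    using cf_den_num_det[of \<alpha> n] by (simp_all add: q_def q'_def p_def p'_def \<delta>_def flip: power_add)
  \<comment> \<open>coordinates of \<open>(d, e)\<close> in the unimodular basis \<open>(q, p), (q', p')\<close>\<close>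
  define u v where "u = \<delta> * (e * q' - d * p')" and "v = \<delta> * (d * p - e * q)"
  have d_eq: "d = u * q + v * q'" and e_eq: "e = u * p + v * p'"
    using det \<open>\<delta> * \<delta> = 1\<close> by (simp_all add: u_def v_def algebra_simps)
  define x where "x = gauss_iter \<alpha> (Suc n)"
  have "d * \<alpha> - e = u * cf_err \<alpha> n + v * cf_err \<alpha> (Suc n)"
    by (simp add: d_eq e_eq cf_err_def q_def q'_def p_def p'_def algebra_simps)
  also have "\<dots> = cf_err \<alpha> n * (u - v * x)"
    by (simp add: cf_err_Suc x_def algebra_simps)
  finally have "\<bar>d * \<alpha> - e\<bar> = \<bar>cf_err \<alpha> n\<bar> * \<bar>u - v * x\<bar>"
    by (simp add: abs_mult)
  moreover have "1 \<le> \<bar>u - v * x\<bar>"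
    using assms cf_den_ge[of n] gauss_iter_bounds[of "Suc n"]
    by (intro short_combination_coeff_bound) (auto simp: d_eq q_def q'_def x_def)
  ultimately show ?thesis
    by (simp add: mult_le_cancel_left1)
qed

end

section \<open>Sturmian sequences\<close>

lemma sturm_s_shiftZ: "shiftZ j (sturm_s \<alpha> \<theta>) = sturm_s \<alpha> (frac (\<theta> + of_int j * \<alpha>))"
  by (rule ext) (simp add: shiftZ_def sturm_s_def frac_add_simps algebra_simps)

lemma sturm_s'_shiftZ: "shiftZ j (sturm_s' \<alpha> \<theta>) = sturm_s' \<alpha> (frac (\<theta> + of_int j * \<alpha>))"
proof -
  have "mod1_up (u + frac v) = mod1_up (u + v)" for u v
    using ceiling_add_of_int[of "u + frac v" "\<lfloor>v\<rfloor>"] by (simp add: mod1_up_def frac_def)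
  then show ?thesis
    by (intro ext) (simp add: shiftZ_def sturm_s'_def algebra_simps)
qed

lemma sturmian_subshift_shiftZ: "x \<in> sturmian_subshift \<alpha> \<Longrightarrow> shiftZ j x \<in> sturmian_subshift \<alpha>"
  by (auto simp: sturmian_subshift_def sturm_s_shiftZ sturm_s'_shiftZ frac_lt_1)

lemma sturm_s_eq_floor_diff:
  assumes "0 < \<alpha>" and "\<alpha> < 1"
  shows "int (sturm_s \<alpha> \<theta> m) = \<lfloor>of_int m * \<alpha> + \<theta> + \<alpha>\<rfloor> - \<lfloor>of_int m * \<alpha> + \<theta>\<rfloor>"
proof -
  define t where "t = of_int m * \<alpha> + \<theta>"
  have "\<lfloor>t\<rfloor> \<le> \<lfloor>t + \<alpha>\<rfloor>" and "\<lfloor>t + \<alpha>\<rfloor> \<le> \<lfloor>t\<rfloor> + 1"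
    using assms by linarith+
  moreover have "\<lfloor>t + \<alpha>\<rfloor> = \<lfloor>t\<rfloor> + 1 \<longleftrightarrow> frac t \<in> {1 - \<alpha>..<1}"
    using assms frac_lt_1[of t] by (simp add: frac_def floor_eq_iff) linarith
  ultimately show ?thesis
    by (auto simp: sturm_s_def t_def)
qed

lemma sturm_s'_eq_ceiling_diff:
  assumes "0 < \<alpha>" and "\<alpha> < 1"
  shows "int (sturm_s' \<alpha> \<theta> m) = \<lceil>of_int m * \<alpha> + \<theta> + \<alpha>\<rceil> - \<lceil>of_int m * \<alpha> + \<theta>\<rceil>"
proof -
  define t where "t = of_int m * \<alpha> + \<theta>"
  have "\<lceil>t\<rceil> \<le> \<lceil>t + \<alpha>\<rceil>" and "\<lceil>t + \<alpha>\<rceil> \<le> \<lceil>t\<rceil> + 1"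
    using assms by linarith+
  moreover have "\<lceil>t + \<alpha>\<rceil> = \<lceil>t\<rceil> + 1 \<longleftrightarrow> mod1_up t \<in> {1 - \<alpha><..1}"
    using assms by (simp add: mod1_up_def ceiling_eq_iff) linarith
  ultimately show ?thesis
    by (auto simp: sturm_s'_def t_def)
qed

lemma floor_jumps_close_mod_1:
  fixes u u' D :: real
  assumes "\<lfloor>u\<rfloor> \<noteq> \<lfloor>u + D\<rfloor>" and "\<lfloor>u'\<rfloor> \<noteq> \<lfloor>u' + D\<rfloor>"
  shows "\<exists>w::int. \<bar>u - u' - w\<bar> < \<bar>D\<bar>"
proof (cases "0 < D")
  case True
  then have "u < \<lfloor>u + D\<rfloor>" and "u' < \<lfloor>u' + D\<rfloor>"
    using assms floor_mono[of u "u + D"] floor_mono[of u' "u' + D"] by linarith+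
  then have "\<bar>u - u' - (\<lfloor>u + D\<rfloor> - \<lfloor>u' + D\<rfloor>)\<bar> < \<bar>D\<bar>"
    using True by linarith
  then show ?thesis
    by (metis of_int_diff)
next
  case False
  then have "u + D < \<lfloor>u\<rfloor>" and "u' + D < \<lfloor>u'\<rfloor>"
    using assms floor_mono[of "u + D" u] floor_mono[of "u' + D" u'] by linarith+
  then have "\<bar>u - u' - (\<lfloor>u\<rfloor> - \<lfloor>u'\<rfloor>)\<bar> < \<bar>D\<bar>"
    using False by linarith
  then show ?thesis
    by (metis of_int_diff)
qed

lemma ceiling_jumps_close_mod_1:
  fixes u u' D :: real
  assumes "\<lceil>u\<rceil> \<noteq> \<lceil>u + D\<rceil>" and "\<lceil>u'\<rceil> \<noteq> \<lceil>u' + D\<rceil>"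
  shows "\<exists>w::int. \<bar>u - u' - w\<bar> < \<bar>D\<bar>"
proof -
  have "\<lfloor>-u\<rfloor> \<noteq> \<lfloor>-u + -D\<rfloor>" and "\<lfloor>-u'\<rfloor> \<noteq> \<lfloor>-u' + -D\<rfloor>"
    using assms by (simp_all add: ceiling_def)
  then obtain w :: int where "\<bar>-u - -u' - w\<bar> < \<bar>-D\<bar>"
    using floor_jumps_close_mod_1 by blast
  then have "\<bar>u - u' - of_int (-w)\<bar> < \<bar>D\<bar>"
    by (simp add: abs_minus_commute)
  then show ?thesis ..
qed

context
  fixes \<alpha> :: real
  assumes \<alpha>_pos: "0 < \<alpha>" and \<alpha>_lt_1: "\<alpha> < 1" and \<alpha>_irrational: "\<alpha> \<notin> \<rat>"
begin

text \<open>A defect \<open>x m \<noteq> x (m + q\<^sub>n)\<close> forces \<open>h\<close> to jump within distance \<open>\<bar>q\<^sub>n \<alpha> - p\<^sub>n\<bar>\<close>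
  of \<open>m \<alpha> + \<theta>\<close> or of \<open>(m + 1) \<alpha> + \<theta>\<close>; two defects thus yield a multiple of \<open>\<alpha>\<close> at
  least as close to an integer, which is excluded by best approximation unless its coefficient is
  \<open>0\<close> or at least \<open>q\<^sub>n\<^sub>+\<^sub>1\<close>.\<close>

lemma mechanical_word_defect_jump:
  fixes h :: "real \<Rightarrow> int" and x :: "int \<Rightarrow> nat"
  assumes h_add_int: "\<And>u k. h (u + of_int k) = h u + k"
    and x: "\<And>m. int (x m) = h (of_int m * \<alpha> + \<theta> + \<alpha>) - h (of_int m * \<alpha> + \<theta>)"
    and "x m \<noteq> x (m + cf_den \<alpha> n)"
  shows "\<exists>e\<in>{0, 1}. h (of_int (m + e) * \<alpha> + \<theta>) \<noteq> h (of_int (m + e) * \<alpha> + \<theta> + cf_err \<alpha> n)"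
proof -
  define t where "t = of_int m * \<alpha> + \<theta>"
  let ?D = "cf_err \<alpha> n"
  have "of_int (m + cf_den \<alpha> n) * \<alpha> + \<theta> = (t + ?D) + of_int (cf_num \<alpha> n)"
    and "of_int (m + cf_den \<alpha> n) * \<alpha> + \<theta> + \<alpha> = (t + \<alpha> + ?D) + of_int (cf_num \<alpha> n)"
    by (simp_all add: t_def cf_err_def algebra_simps)
  then have "int (x (m + cf_den \<alpha> n)) = h (t + \<alpha> + ?D) - h (t + ?D)"
    by (simp only: x h_add_int)
  moreover have "int (x m) = h (t + \<alpha>) - h t"
    using x[of m] by (simp add: t_def)
  ultimately have "h t \<noteq> h (t + ?D) \<or> h (t + \<alpha>) \<noteq> h (t + \<alpha> + ?D)"
    using assms(3) by auto
  then show ?thesis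
  proof
    assume "h t \<noteq> h (t + ?D)"
    then show ?thesis
      by (intro bexI[of _ 0]) (simp_all add: t_def)
  next
    assume "h (t + \<alpha>) \<noteq> h (t + \<alpha> + ?D)"
    then show ?thesis
      by (intro bexI[of _ 1]) (simp_all add: t_def algebra_simps)
  qed
qed

lemma mechanical_word_defects_separated:
  fixes h :: "real \<Rightarrow> int" and x :: "int \<Rightarrow> nat"
  assumes h_add_int: "\<And>u k. h (u + of_int k) = h u + k"
    and h_jumps: "\<And>u u' D. h u \<noteq> h (u + D) \<Longrightarrow> h u' \<noteq> h (u' + D) \<Longrightarrow>
      \<exists>w::int. \<bar>u - u' - w\<bar> < \<bar>D\<bar>"
    and x: "\<And>m. int (x m) = h (of_int m * \<alpha> + \<theta> + \<alpha>) - h (of_int m * \<alpha> + \<theta>)"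
    and "x m \<noteq> x (m + cf_den \<alpha> n)" and "x m' \<noteq> x (m' + cf_den \<alpha> n)"
  shows "\<bar>m - m'\<bar> \<le> 1 \<or> cf_den \<alpha> (Suc n) - 1 \<le> \<bar>m - m'\<bar>"
proof -
  let ?D = "cf_err \<alpha> n"
  obtain e e' where "e \<in> {0, 1}" "e' \<in> {0, 1}"
    and "h (of_int (m + e) * \<alpha> + \<theta>) \<noteq> h (of_int (m + e) * \<alpha> + \<theta> + ?D)"
    and "h (of_int (m' + e') * \<alpha> + \<theta>) \<noteq> h (of_int (m' + e') * \<alpha> + \<theta> + ?D)"
    using mechanical_word_defect_jump[of h x \<theta>] h_add_int x assms(4,5) by meson
  then obtain w :: int
    where "\<bar>(of_int (m + e) * \<alpha> + \<theta>) - (of_int (m' + e') * \<alpha> + \<theta>) - w\<bar> < \<bar>?D\<bar>"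
    using h_jumps by blast
  then have "\<bar>of_int (m + e - m' - e') * \<alpha> - w\<bar> < \<bar>?D\<bar>"
    by (simp add: algebra_simps)
  then have "m + e - m' - e' = 0 \<or> cf_den \<alpha> (Suc n) \<le> \<bar>m + e - m' - e'\<bar>"
    using cf_best_approx[OF \<alpha>_pos \<alpha>_lt_1 \<alpha>_irrational, of "m + e - m' - e'" n w] by linarith
  moreover have "0 \<le> e" "e \<le> 1" "0 \<le> e'" "e' \<le> 1"
    using \<open>e \<in> {0, 1}\<close> \<open>e' \<in> {0, 1}\<close> by auto
  ultimately show ?thesis
    by linarith
qed

lemma sturmian_defects_separated:
  assumes "x \<in> sturmian_subshift \<alpha>"
    and "x m \<noteq> x (m + cf_den \<alpha> n)" and "x m' \<noteq> x (m' + cf_den \<alpha> n)"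
  shows "\<bar>m - m'\<bar> \<le> 1 \<or> cf_den \<alpha> (Suc n) - 1 \<le> \<bar>m - m'\<bar>"
proof -
  from assms(1) obtain \<theta> where "x = sturm_s \<alpha> \<theta> \<or> x = sturm_s' \<alpha> \<theta>"
    unfolding sturmian_subshift_def by blast
  then show ?thesis
  proof
    assume "x = sturm_s \<alpha> \<theta>"
    then show ?thesis
      using mechanical_word_defects_separated[of floor x \<theta>] assms(2,3) floor_jumps_close_mod_1
        sturm_s_eq_floor_diff[OF \<alpha>_pos \<alpha>_lt_1] by auto
  next
    assume "x = sturm_s' \<alpha> \<theta>"
    then show ?thesis
      using mechanical_word_defects_separated[of ceiling x \<theta>] assms(2,3) ceiling_jumps_close_mod_1
        sturm_s'_eq_ceiling_diff[OF \<alpha>_pos \<alpha>_lt_1] by auto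
  qed
qed

lemma sturmian_defects_sparse:
  assumes "x \<in> sturmian_subshift \<alpha>" and "4 * P \<le> cf_digit \<alpha> n"
    and "x m \<noteq> x (m + cf_den \<alpha> n)" and "x m' \<noteq> x (m' + cf_den \<alpha> n)"
  shows "\<bar>m - m'\<bar> \<le> 1 \<or> 4 * int P * cf_den \<alpha> n - 1 \<le> \<bar>m - m'\<bar>"
proof -
  have "4 * int P * cf_den \<alpha> n \<le> cf_digit \<alpha> n * cf_den \<alpha> n"
    using assms(2) cf_den_ge[OF \<alpha>_pos \<alpha>_lt_1 \<alpha>_irrational, of n] by (intro mult_right_mono) simp_all
  also have "\<dots> \<le> cf_den \<alpha> (Suc n)"
    by (rule cf_den_Suc_ge[OF \<alpha>_pos \<alpha>_lt_1 \<alpha>_irrational])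
  finally show ?thesis
    using sturmian_defects_separated[OF assms(1,3,4)] by linarith
qed

end

section \<open>Gordon's lemma\<close>

definition periodic_on :: "(int \<Rightarrow> 'a) \<Rightarrow> int \<Rightarrow> int set \<Rightarrow> bool" where
  "periodic_on x q I \<longleftrightarrow> (\<forall>m\<in>I. x (m + q) = x m)"

definition eigen_solution :: "(int \<Rightarrow> real) \<Rightarrow> complex \<Rightarrow> (int \<Rightarrow> complex) \<Rightarrow> bool" where
  "eigen_solution V E \<psi> \<longleftrightarrow> (\<forall>n. \<psi> (n + 1) + \<psi> (n - 1) + of_real (V n) * \<psi> n = E * \<psi> n)"

lemma has_eigenvalue_iff:
  "has_eigenvalue V \<longleftrightarrow>
     (\<exists>E \<psi>. \<psi> \<noteq> (\<lambda>_. 0) \<and> (\<lambda>n. (cmod (\<psi> n))\<^sup>2) summable_on UNIV \<and> eigen_solution V E \<psi>)"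
  by (simp add: has_eigenvalue_def eigen_solution_def)

lemma eigen_solution_step:
  assumes "eigen_solution V E \<psi>"
  shows "\<psi> (n + 1) = (E - of_real (V n)) * \<psi> n - \<psi> (n - 1)"
  using assms unfolding eigen_solution_def
  by (metis add_diff_cancel_left' diff_add_cancel left_diff_distrib)

type_synonym mat2 = "complex \<times> complex \<times> complex \<times> complex"

fun mat2_mult :: "mat2 \<Rightarrow> mat2 \<Rightarrow> mat2" where
  "mat2_mult (a, b, c, d) (a', b', c', d') =
     (a * a' + b * c', a * b' + b * d', c * a' + d * c', c * b' + d * d')"

fun mat2_apply :: "mat2 \<Rightarrow> complex \<times> complex \<Rightarrow> complex \<times> complex" where
  "mat2_apply (a, b, c, d) (x, y) = (a * x + b * y, c * x + d * y)"

fun mat2_det :: "mat2 \<Rightarrow> complex" where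
  "mat2_det (a, b, c, d) = a * d - b * c"

fun mat2_trace :: "mat2 \<Rightarrow> complex" where
  "mat2_trace (a, b, c, d) = a + d"

lemma mat2_apply_mult: "mat2_apply (mat2_mult A B) v = mat2_apply A (mat2_apply B v)"
  by (cases A; cases B; cases v) (simp add: algebra_simps)

lemma mat2_det_mult: "mat2_det (mat2_mult A B) = mat2_det A * mat2_det B"
  by (cases A; cases B) (simp add: algebra_simps)

lemma mat2_cayley_hamilton:
  "mat2_apply M (mat2_apply M v) =
    (mat2_trace M * fst (mat2_apply M v) - mat2_det M * fst v,
     mat2_trace M * snd (mat2_apply M v) - mat2_det M * snd v)"
  by (cases M; cases v) (simp add: algebra_simps)

definition transfer_step :: "(int \<Rightarrow> real) \<Rightarrow> complex \<Rightarrow> int \<Rightarrow> mat2" where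
  "transfer_step V E j = (E - of_real (V j), -1, 1, 0)"

fun transfer_matrix :: "(int \<Rightarrow> real) \<Rightarrow> complex \<Rightarrow> int \<Rightarrow> nat \<Rightarrow> mat2" where
  "transfer_matrix V E j 0 = (1, 0, 0, 1)"
| "transfer_matrix V E j (Suc n) =
     mat2_mult (transfer_step V E (j + int n)) (transfer_matrix V E j n)"

definition transfer_state :: "(int \<Rightarrow> complex) \<Rightarrow> int \<Rightarrow> complex \<times> complex" where
  "transfer_state \<psi> j = (\<psi> j, \<psi> (j - 1))"

lemma mat2_det_transfer_matrix: "mat2_det (transfer_matrix V E j n) = 1"
  by (induction n) (simp_all add: mat2_det_mult transfer_step_def)

lemma transfer_state_add:
  assumes "eigen_solution V E \<psi>"
  shows "transfer_state \<psi> (j + int n) = mat2_apply (transfer_matrix V E j n) (transfer_state \<psi> j)"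
proof (induction n)
  case (Suc n)
  have "\<psi> (j + int n + 1) = (E - of_real (V (j + int n))) * \<psi> (j + int n) - \<psi> (j + int n - 1)"
    using assms by (rule eigen_solution_step)
  then have "transfer_state \<psi> (j + int (Suc n)) =
      mat2_apply (transfer_step V E (j + int n)) (transfer_state \<psi> (j + int n))"
    by (simp add: transfer_state_def transfer_step_def add_ac)
  with Suc show ?case
    by (simp add: mat2_apply_mult)
qed (simp add: transfer_state_def)

lemma transfer_matrix_shift:
  assumes "periodic_on V Q {j..<j + int n}"
  shows "transfer_matrix V E (j + Q) n = transfer_matrix V E j n"
  using assms
proof (induction n)
  case (Suc n)
  then have "transfer_matrix V E (j + Q) n = transfer_matrix V E j n"
    by (simp add: periodic_on_def)
  moreover have "V (j + int n + Q) = V (j + int n)"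
    using Suc.prems by (simp add: periodic_on_def)
  ultimately show ?case
    by (simp add: transfer_step_def add_ac)
qed simp

text \<open>The coefficient \<open>t\<close> is the trace of the unimodular transfer matrix \<open>M\<close> over one block:
  \<open>M\<^sup>2 = t M - 1\<close> by Cayley-Hamilton.\<close>

lemma repeated_block_recurrence:
  assumes "eigen_solution V E \<psi>" and "periodic_on V (int Q) {s..<s + 2 * int Q}"
  obtains t where
    "\<And>k. k \<in> {s, s - 1} \<Longrightarrow> \<psi> (k + 2 * int Q) = t * \<psi> (k + int Q) - \<psi> k"
    "\<And>k. k \<in> {s, s - 1} \<Longrightarrow> \<psi> (k + 3 * int Q) = t * \<psi> (k + 2 * int Q) - \<psi> (k + int Q)"
proof -
  define M where "M = transfer_matrix V E s Q"
  have M1: "transfer_matrix V E (s + int Q) Q = M"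
    unfolding M_def using assms(2) by (intro transfer_matrix_shift) (simp add: periodic_on_def)
  have M2: "transfer_matrix V E (s + int Q + int Q) Q = M"
    unfolding M1[symmetric] using assms(2)
    by (intro transfer_matrix_shift) (simp add: periodic_on_def)
  let ?u0 = "transfer_state \<psi> s" and ?u1 = "transfer_state \<psi> (s + int Q)"
    and ?u2 = "transfer_state \<psi> (s + 2 * int Q)" and ?u3 = "transfer_state \<psi> (s + 3 * int Q)"
  have two: "s + 2 * int Q = s + int Q + int Q"
    and three: "s + 3 * int Q = s + int Q + int Q + int Q"
    by simp_all
  have step1: "?u1 = mat2_apply M ?u0"
    using transfer_state_add[OF assms(1), of s Q] unfolding M_def .
  have step2: "?u2 = mat2_apply M ?u1"
    using transfer_state_add[OF assms(1), of "s + int Q" Q] unfolding M1 two .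
  have step3: "?u3 = mat2_apply M ?u2"
    using transfer_state_add[OF assms(1), of "s + int Q + int Q" Q] unfolding M2 two three .
  define t where "t = mat2_trace M"
  have "mat2_det M = 1"
    by (simp add: M_def mat2_det_transfer_matrix)
  then have fst_rec: "fst (mat2_apply M (mat2_apply M v)) = t * fst (mat2_apply M v) - fst v"
    and snd_rec: "snd (mat2_apply M (mat2_apply M v)) = t * snd (mat2_apply M v) - snd v" for v
    using mat2_cayley_hamilton[of M v] by (simp_all add: t_def)
  have "fst ?u2 = t * fst ?u1 - fst ?u0" and "snd ?u2 = t * snd ?u1 - snd ?u0"
    and "fst ?u3 = t * fst ?u2 - fst ?u1" and "snd ?u3 = t * snd ?u2 - snd ?u1"
    by (simp_all only: step1 step2 step3 fst_rec snd_rec)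
  then show ?thesis
    by (intro that[of t]) (auto simp: transfer_state_def algebra_simps)
qed

lemma three_term_recurrence_bound:
  fixes w0 w1 w2 w3 t :: "'a::real_normed_field"
  assumes "w2 = t * w1 - w0" and "w3 = t * w2 - w1"
  shows "norm w1 \<le> norm w0 + norm w2 + norm w3" and "norm w2 \<le> norm w0 + norm w1 + norm w3"
proof -
  have "norm w1 \<le> norm w0 + norm w2 \<and> norm w2 \<le> norm w1 + norm w3
      \<or> norm w1 \<le> norm w2 + norm w3 \<and> norm w2 \<le> norm w0 + norm w1"
  proof (cases "1 \<le> norm t")
    case True
    have "norm w1 \<le> norm (t * w1)" and "norm w2 \<le> norm (t * w2)"
      using True by (simp_all add: norm_mult mult_le_cancel_right1)
    moreover have "t * w1 = w2 + w0" and "t * w2 = w3 + w1"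
      using assms by simp_all
    ultimately show ?thesis
      using norm_triangle_ineq[of w2 w0] norm_triangle_ineq[of w3 w1] by auto
  next
    case False
    have "norm (t * w1) \<le> norm w1" and "norm (t * w2) \<le> norm w2"
      using False by (simp_all add: norm_mult mult_left_le_one_le)
    moreover have "norm w1 \<le> norm (t * w2) + norm w3" and "norm w2 \<le> norm (t * w1) + norm w0"
      using norm_triangle_ineq4[of "t * w2" w3] norm_triangle_ineq4[of "t * w1" w0] assms
      by simp_all
    ultimately show ?thesis
      by linarith
  qed
  then show "norm w1 \<le> norm w0 + norm w2 + norm w3" and "norm w2 \<le> norm w0 + norm w1 + norm w3"
    using norm_ge_zero[of w0] norm_ge_zero[of w3] by linarith+
qed

lemma square_summable_small_at_infinity:
  fixes \<psi> :: "int \<Rightarrow> 'a::real_normed_vector"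
  assumes "(\<lambda>n. (norm (\<psi> n))\<^sup>2) summable_on UNIV" and "0 < \<epsilon>"
  shows "\<exists>N. \<forall>n. N \<le> \<bar>n\<bar> \<longrightarrow> norm (\<psi> n) < \<epsilon>"
proof -
  have "\<exists>N. \<forall>n\<ge>N. norm (\<psi> (h n)) < \<epsilon>" if "inj h" for h :: "nat \<Rightarrow> int"
  proof -
    have "(\<lambda>n. (norm (\<psi> n))\<^sup>2) summable_on range h"
      using assms(1) by (rule summable_on_subset_banach) simp
    then have "summable (\<lambda>n. (norm (\<psi> (h n)))\<^sup>2)"
      using that by (simp add: summable_on_reindex summable_on_imp_summable comp_def)
    then have "\<forall>\<^sub>F n in sequentially. (norm (\<psi> (h n)))\<^sup>2 < \<epsilon>\<^sup>2"
      using summable_LIMSEQ_zero order_tendstoD(2) assms(2) by fastforce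
    then show ?thesis
      using assms(2) unfolding eventually_sequentially by (meson less_imp_le power2_less_imp_less)
  qed
  from this[of int] this[of "\<lambda>n. - int n"] obtain N1 N2
    where "\<forall>n\<ge>N1. norm (\<psi> (int n)) < \<epsilon>" and "\<forall>n\<ge>N2. norm (\<psi> (- int n)) < \<epsilon>"
    by (auto simp: inj_def)
  then have "norm (\<psi> n) < \<epsilon>" if "int (max N1 N2) \<le> \<bar>n\<bar>" for n
    using that by (cases "0 \<le> n") (auto dest: spec[of _ "nat \<bar>n\<bar>"])
  then show ?thesis
    by blast
qed

lemma eigen_solution_eq_0:
  assumes "eigen_solution V E \<psi>" and "\<psi> 0 = 0" and "\<psi> (-1) = 0"
  shows "\<psi> = (\<lambda>_. 0)"
proof -
  have "\<psi> (int n) = 0 \<and> \<psi> (int n - 1) = 0" for n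
  proof (induction n)
    case (Suc n)
    with eigen_solution_step[OF assms(1), of "int n"] show ?case
      by (simp add: add.commute)
  qed (use assms in simp)
  moreover have "\<psi> (- int n) = 0 \<and> \<psi> (- int n - 1) = 0" for n
  proof (induction n)
    case (Suc n)
    have "\<psi> (- int n - 1 + 1) =
        (E - of_real (V (- int n - 1))) * \<psi> (- int n - 1) - \<psi> (- int n - 1 - 1)"
      using assms(1) by (rule eigen_solution_step)
    moreover have "- int (Suc n) = - int n - 1" and "- int (Suc n) - 1 = - int n - 1 - 1"
      by simp_all
    ultimately show ?case
      using Suc by (simp only:) simp
  qed (use assms in simp)
  ultimately show ?thesis
    by (metis int_cases2)
qed

lemma gordon_estimate:
  assumes "eigen_solution V E \<psi>" and "k \<in> {0, -1}"
    and "periodic_on V (int Q) {- int Q..<int Q} \<or> periodic_on V (int Q) {- 2 * int Q..<0}"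
  shows "cmod (\<psi> k) \<le> cmod (\<psi> (k - 2 * int Q)) + cmod (\<psi> (k - int Q))
    + cmod (\<psi> (k + int Q)) + cmod (\<psi> (k + 2 * int Q))"
  using assms(3)
proof
  assume "periodic_on V (int Q) {- int Q..<int Q}"
  then obtain t where
    "\<And>j. j \<in> {- int Q, - int Q - 1} \<Longrightarrow>
      \<psi> (j + 2 * int Q) = t * \<psi> (j + int Q) - \<psi> j"
    "\<And>j. j \<in> {- int Q, - int Q - 1} \<Longrightarrow>
      \<psi> (j + 3 * int Q) = t * \<psi> (j + 2 * int Q) - \<psi> (j + int Q)"
    using repeated_block_recurrence[OF assms(1), of Q "- int Q"] by auto
  from this[of "k - int Q"] assms(2)
  have "\<psi> (k + int Q) = t * \<psi> k - \<psi> (k - int Q)"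
    and "\<psi> (k + 2 * int Q) = t * \<psi> (k + int Q) - \<psi> k"
    by (auto simp: algebra_simps)
  from three_term_recurrence_bound(1)[OF this] show ?thesis
    using norm_ge_zero[of "\<psi> (k - 2 * int Q)"] by linarith
next
  assume "periodic_on V (int Q) {- 2 * int Q..<0}"
  then obtain t where
    "\<And>j. j \<in> {- 2 * int Q, - 2 * int Q - 1} \<Longrightarrow>
      \<psi> (j + 2 * int Q) = t * \<psi> (j + int Q) - \<psi> j"
    "\<And>j. j \<in> {- 2 * int Q, - 2 * int Q - 1} \<Longrightarrow>
      \<psi> (j + 3 * int Q) = t * \<psi> (j + 2 * int Q) - \<psi> (j + int Q)"
    using repeated_block_recurrence[OF assms(1), of Q "- 2 * int Q"] by auto
  from this[of "k - 2 * int Q"] assms(2)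
  have "\<psi> k = t * \<psi> (k - int Q) - \<psi> (k - 2 * int Q)"
    and "\<psi> (k + int Q) = t * \<psi> k - \<psi> (k - int Q)"
    by (auto simp: algebra_simps)
  from three_term_recurrence_bound(2)[OF this] show ?thesis
    using norm_ge_zero[of "\<psi> (k + 2 * int Q)"] by linarith
qed

lemma gordon_no_eigenvalue:
  assumes "\<exists>\<^sub>F Q in sequentially.
    periodic_on V (int Q) {- int Q..<int Q} \<or> periodic_on V (int Q) {- 2 * int Q..<0}"
  shows "\<not> has_eigenvalue V"
proof
  assume "has_eigenvalue V"
  then obtain E \<psi> where "\<psi> \<noteq> (\<lambda>_. 0)" and l2: "(\<lambda>n. (cmod (\<psi> n))\<^sup>2) summable_on UNIV"
    and sol: "eigen_solution V E \<psi>"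
    by (auto simp: has_eigenvalue_iff)
  have "\<psi> k = 0" if k: "k \<in> {0, -1}" for k
  proof -
    have bound: "cmod (\<psi> k) \<le> 4 * \<epsilon>" if "0 < \<epsilon>" for \<epsilon>
    proof -
      obtain N where N: "\<And>n. N \<le> \<bar>n\<bar> \<Longrightarrow> cmod (\<psi> n) < \<epsilon>"
        using square_summable_small_at_infinity[OF l2 \<open>0 < \<epsilon>\<close>] by blast
      obtain Q :: nat where "nat N + 2 \<le> Q" and
        "periodic_on V (int Q) {- int Q..<int Q} \<or> periodic_on V (int Q) {- 2 * int Q..<0}"
        using assms by (auto simp: frequently_sequentially)
      moreover from this(1) have "cmod (\<psi> (k - 2 * int Q)) < \<epsilon>" "cmod (\<psi> (k - int Q)) < \<epsilon>"
        "cmod (\<psi> (k + int Q)) < \<epsilon>" "cmod (\<psi> (k + 2 * int Q)) < \<epsilon>"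
        using k by (auto intro!: N)
      ultimately show ?thesis
        using gordon_estimate[OF sol k, of Q] by linarith
    qed
    have "cmod (\<psi> k) \<le> 0 + \<epsilon>" if "0 < \<epsilon>" for \<epsilon>
      using bound[of "\<epsilon> / 4"] that by simp
    then have "cmod (\<psi> k) \<le> 0"
      by (rule field_le_epsilon)
    then show ?thesis
      by simp
  qed
  with eigen_solution_eq_0[OF sol] \<open>\<psi> \<noteq> (\<lambda>_. 0)\<close> show False
    by simp
qed

lemma has_eigenvalue_shift:
  assumes "has_eigenvalue V"
  shows "has_eigenvalue (\<lambda>i. V (i + j))"
proof -
  obtain E \<psi> where "\<psi> \<noteq> (\<lambda>_. 0)" and l2: "(\<lambda>n. (cmod (\<psi> n))\<^sup>2) summable_on UNIV"
    and sol: "eigen_solution V E \<psi>"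
    using assms by (auto simp: has_eigenvalue_iff)
  have "(\<lambda>i. \<psi> (i + j)) \<noteq> (\<lambda>_. 0)"
    using \<open>\<psi> \<noteq> (\<lambda>_. 0)\<close> by (metis diff_add_cancel)
  moreover have "bij (\<lambda>i::int. i + j)"
    by (rule bij_betwI[where g = "\<lambda>i. i - j"]) auto
  then have "(\<lambda>i. (cmod (\<psi> (i + j)))\<^sup>2) summable_on UNIV"
    using summable_on_reindex_bij_betw[of "\<lambda>i. i + j" UNIV UNIV "\<lambda>n. (cmod (\<psi> n))\<^sup>2"] l2
    by simp
  moreover have "eigen_solution (\<lambda>i. V (i + j)) E (\<lambda>i. \<psi> (i + j))"
    unfolding eigen_solution_def
  proof
    fix n
    show "\<psi> (n + 1 + j) + \<psi> (n - 1 + j) + of_real (V (n + j)) * \<psi> (n + j) = E * \<psi> (n + j)"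
      using sol[unfolded eigen_solution_def, rule_format, of "n + j"] by (simp add: algebra_simps)
  qed
  ultimately show ?thesis
    by (auto simp: has_eigenvalue_iff)
qed

section \<open>Repetitions from sparse defects\<close>

lemma periodic_on_subset: "periodic_on x q I \<Longrightarrow> J \<subseteq> I \<Longrightarrow> periodic_on x q J"
  by (auto simp: periodic_on_def)

lemma periodic_on_iterate:
  assumes "periodic_on x q {lo..hi + int r * q}" and "0 \<le> q"
  shows "periodic_on x (int (Suc r) * q) {lo..hi}"
  using assms(1)
proof (induction r)
  case (Suc r)
  have "periodic_on x q {lo..hi + int r * q}"
    using Suc.prems by (rule periodic_on_subset) (use assms(2) in \<open>simp add: algebra_simps\<close>)
  with Suc.IH have "x (m + int (Suc r) * q) = x m" if "m \<in> {lo..hi}" for m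
    using that by (simp add: periodic_on_def)
  moreover have "x (m + int (Suc r) * q + q) = x (m + int (Suc r) * q)" if "m \<in> {lo..hi}" for m
  proof -
    have "0 \<le> int (Suc r) * q"
      using assms(2) by simp
    with that have "m + int (Suc r) * q \<in> {lo..hi + int (Suc r) * q}"
      by simp
    with Suc.prems show ?thesis
      unfolding periodic_on_def by blast
  qed
  ultimately show ?case
    by (simp add: periodic_on_def algebra_simps)
qed simp

lemma periodic_add_mult:
  assumes "\<forall>m. y (m + int p) = y m"
  shows "y (m + int p * t) = y m"
proof -
  have nonneg: "y (m + int p * int s) = y m" for m s
  proof (induction s)
    case (Suc s)
    have "y (m + int p * int (Suc s)) = y ((m + int p * int s) + int p)"
      by (simp add: algebra_simps)
    also have "\<dots> = y m"
      using assms Suc by simp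
    finally show ?case .
  qed simp
  show ?thesis
  proof (cases "0 \<le> t")
    case True
    then show ?thesis
      using nonneg[of m "nat t"] by simp
  next
    case False
    then show ?thesis
      using nonneg[of "m + int p * t" "nat (- t)"] by simp
  qed
qed

lemma sliding_block_periodic_on:
  fixes x :: "int \<Rightarrow> 'a" and x' :: "int \<Rightarrow> 'b" and G :: "'a list \<Rightarrow> (int \<Rightarrow> 'b) \<Rightarrow> 'c"
  assumes "periodic_on x Q {n + a..n + b + int k}" and "\<forall>m. x' (m + Q) = x' m"
  shows "periodic_on (\<lambda>j. G (map (\<lambda>i. x (n + int i + j)) [0..<k]) (shiftZ j x')) Q {a..<b}"
proof -
  have block: "map (\<lambda>i. x (n + int i + (j + Q))) [0..<k] = map (\<lambda>i. x (n + int i + j)) [0..<k]"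
    if "j \<in> {a..<b}" for j
    using assms(1) that by (auto simp: periodic_on_def add_ac)
  have shift: "shiftZ (j + Q) x' = shiftZ j x'" for j
    unfolding shiftZ_def by (metis add.assoc assms(2))
  show ?thesis
    unfolding periodic_on_def
  proof
    fix j
    assume "j \<in> {a..<b}"
    then show "G (map (\<lambda>i. x (n + int i + (j + Q))) [0..<k]) (shiftZ (j + Q) x') =
        G (map (\<lambda>i. x (n + int i + j)) [0..<k]) (shiftZ j x')"
      by (simp only: block shift)
  qed
qed

text \<open>\<open>x\<close> has period \<open>q\<close> on a neighbourhood of the block \<open>x n, \<dots>, x (n + k - 1)\<close> large
  enough that iterating the period \<open>P\<close> times gives the period \<open>P q\<close> on one of the two ranges of
  Gordon's lemma.\<close>

definition gordon_window :: "(int \<Rightarrow> 'a) \<Rightarrow> int \<Rightarrow> nat \<Rightarrow> int \<Rightarrow> nat \<Rightarrow> bool" where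
  "gordon_window x q P n k \<longleftrightarrow>
     periodic_on x q {n - int P * q..n + int k + (2 * int P - 1) * q} \<or>
     periodic_on x q {n - 2 * int P * q..n + int k + (int P - 1) * q}"

lemma periodic_on_shiftZ: "periodic_on (shiftZ j x) q I \<longleftrightarrow> periodic_on x q ((\<lambda>m. m + j) ` I)"
  by (simp add: periodic_on_def shiftZ_def add_ac)

lemma gordon_window_shiftZ: "gordon_window (shiftZ j x) q P n k \<longleftrightarrow> gordon_window x q P (n + j) k"
  by (simp add: gordon_window_def periodic_on_shiftZ algebra_simps)

lemma gordon_window_sliding_block:
  fixes x :: "int \<Rightarrow> 'a" and x' :: "int \<Rightarrow> 'b" and G :: "'a list \<Rightarrow> (int \<Rightarrow> 'b) \<Rightarrow> 'c"
  assumes "gordon_window x q P n k" and "0 \<le> q" and "0 < P" and "\<forall>m. x' (m + int P) = x' m"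
  defines "V \<equiv> \<lambda>j. G (map (\<lambda>i. x (n + int i + j)) [0..<k]) (shiftZ j x')"
  shows "periodic_on V (int P * q) {- (int P * q)..<int P * q}
    \<or> periodic_on V (int P * q) {- 2 * int P * q..<0}"
proof -
  obtain r where P: "P = Suc r"
    using assms(3) gr0_implies_Suc by blast
  have x': "\<forall>m. x' (m + int P * q) = x' m"
    using periodic_add_mult[OF assms(4)] by blast
  from assms(1) show ?thesis
    unfolding gordon_window_def
  proof
    assume "periodic_on x q {n - int P * q..n + int k + (2 * int P - 1) * q}"
    then have "periodic_on x q {n - int P * q..(n + int P * q + int k) + int r * q}"
      by (simp add: P algebra_simps)
    from periodic_on_iterate[OF this assms(2)]
    have "periodic_on x (int P * q) {n + - (int P * q)..n + int P * q + int k}"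
      by (simp add: P)
    from sliding_block_periodic_on[OF this x', of G] show ?thesis
      by (simp add: V_def)
  next
    assume "periodic_on x q {n - 2 * int P * q..n + int k + (int P - 1) * q}"
    then have "periodic_on x q {n - 2 * int P * q..(n + int k) + int r * q}"
      by (simp add: P algebra_simps)
    from periodic_on_iterate[OF this assms(2)]
    have "periodic_on x (int P * q) {n + - (2 * int P * q)..n + 0 + int k}"
      by (simp add: P algebra_simps)
    from sliding_block_periodic_on[OF this x', of G] show ?thesis
      by (simp add: V_def)
  qed
qed

lemma defect_near_shift_without_gordon_window:
  fixes x :: "int \<Rightarrow> 'a"
  assumes "0 < P" and "2 * int k + 8 \<le> q"
    and sep: "\<And>m m'. x m \<noteq> x (m + q) \<Longrightarrow> x m' \<noteq> x (m' + q) \<Longrightarrow>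
      \<bar>m - m'\<bar> \<le> 1 \<or> 4 * int P * q - 1 \<le> \<bar>m - m'\<bar>"
    and "\<not> gordon_window (shiftZ j x) q P n k"
  shows "\<exists>d. x d \<noteq> x (d + q) \<and> n + j - int P * q \<le> d \<and> d \<le> n + j + int k + int P * q - q + 1"
proof -
  define Q where "Q = int P * q"
  have "q \<le> Q"
    using assms(1,2) by (simp add: Q_def mult_le_cancel_right1)
  have "\<not> periodic_on x q {n + j - Q..n + j + int k + 2 * Q - q}"
    and "\<not> periodic_on x q {n + j - 2 * Q..n + j + int k + Q - q}"
    using assms(4) unfolding gordon_window_shiftZ
    by (simp_all add: gordon_window_def Q_def algebra_simps)
  then obtain d1 d2
    where d1: "x d1 \<noteq> x (d1 + q)" "n + j - Q \<le> d1" "d1 \<le> n + j + int k + 2 * Q - q"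
      and d2: "x d2 \<noteq> x (d2 + q)" "n + j - 2 * Q \<le> d2" "d2 \<le> n + j + int k + Q - q"
    unfolding periodic_on_def by (metis atLeastAtMost_iff)
  have "\<bar>d1 - d2\<bar> < 4 * Q - 1"
    using d1 d2 assms(2) \<open>q \<le> Q\<close> by auto
  with sep[OF d1(1) d2(1)] have "\<bar>d1 - d2\<bar> \<le> 1"
    by (auto simp: Q_def mult.assoc)
  with d1 d2 show ?thesis
    by (intro exI[of _ d1]) (auto simp: Q_def)
qed

text \<open>Sparse defects can spoil the window at the shifts in a range of length \<open>2 P q\<close> only
  through a single cluster of them, hence only at about half of these shifts.\<close>

lemma card_shifts_without_gordon_window:
  fixes x :: "int \<Rightarrow> 'a"
  assumes "0 < P" and "2 * int k + 8 \<le> q"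
    and sep: "\<And>m m'. x m \<noteq> x (m + q) \<Longrightarrow> x m' \<noteq> x (m' + q) \<Longrightarrow>
      \<bar>m - m'\<bar> \<le> 1 \<or> 4 * int P * q - 1 \<le> \<bar>m - m'\<bar>"
  shows "int (card {i \<in> {..<nat (2 * int P * q)}. \<not> gordon_window (shiftZ (int i) x) q P n k})
    \<le> 2 * int P * q - q + int k + 4"
proof -
  define Q where "Q = int P * q"
  define J where "J = {i \<in> {..<nat (2 * int P * q)}. \<not> gordon_window (shiftZ (int i) x) q P n k}"
  have "q \<le> Q"
    using assms(1,2) by (simp add: Q_def mult_le_cancel_right1)
  have defect: "\<exists>d. x d \<noteq> x (d + q) \<and> n + int i - Q \<le> d \<and> d \<le> n + int i + int k + Q - q + 1"
    if "i \<in> J" for i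
    using defect_near_shift_without_gordon_window[where x = x, OF assms(1,2) sep] that
    by (simp add: J_def Q_def)
  have "0 \<le> 2 * Q - q + int k + 4"
    using \<open>q \<le> Q\<close> assms(2) by simp
  have "int (card J) \<le> 2 * Q - q + int k + 4"
  proof (cases "J = {}")
    case False
    then obtain i1 where "i1 \<in> J"
      by blast
    with defect obtain d1
      where d1: "x d1 \<noteq> x (d1 + q)" "n + int i1 - Q \<le> d1" "d1 \<le> n + int i1 + int k + Q - q + 1"
      by blast
    have "int ` J \<subseteq> {d1 - n - int k - Q + q - 2..d1 + Q - n + 1}"
    proof
      fix j
      assume "j \<in> int ` J"
      then obtain i where "i \<in> J" "j = int i"
        by blast
      with defect obtain d
        where d: "x d \<noteq> x (d + q)" "n + j - Q \<le> d" "d \<le> n + j + int k + Q - q + 1"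
        by blast
      have "0 \<le> j" "j < 2 * Q" "int i1 < 2 * Q"
        using \<open>i \<in> J\<close> \<open>i1 \<in> J\<close> \<open>j = int i\<close> by (auto simp: J_def Q_def)
      with d d1 assms(2) have "\<bar>d - d1\<bar> < 4 * Q - 1"
        by auto
      with sep[OF d(1) d1(1)] have "\<bar>d - d1\<bar> \<le> 1"
        by (auto simp: Q_def mult.assoc)
      with d show "j \<in> {d1 - n - int k - Q + q - 2..d1 + Q - n + 1}"
        by auto
    qed
    then have "card (int ` J) \<le> card {d1 - n - int k - Q + q - 2..d1 + Q - n + 1}"
      by (intro card_mono) auto
    then have "card J \<le> nat (2 * Q - q + int k + 4)"
      by (simp add: card_image algebra_simps)
    with \<open>0 \<le> 2 * Q - q + int k + 4\<close> show ?thesis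
      by (simp add: le_nat_iff)
  qed (use \<open>0 \<le> 2 * Q - q + int k + 4\<close> in simp)
  then show ?thesis
    by (simp add: J_def Q_def mult.assoc)
qed

section \<open>Ergodic averaging\<close>

definition measure_preserving :: "'a measure \<Rightarrow> ('a \<Rightarrow> 'a) \<Rightarrow> bool" where
  "measure_preserving M T \<longleftrightarrow> prob_space M \<and> T \<in> measurable M M \<and>
     (\<forall>A \<in> sets M. emeasure M (T -` A \<inter> space M) = emeasure M A)"

lemma measure_preserving_if_ergodic: "ergodic_measure M T \<Longrightarrow> measure_preserving M T"
  by (simp add: ergodic_measure_def measure_preserving_def)

lemma measure_preserving_funpow:
  assumes "measure_preserving M T" and "B \<in> sets M"
  shows "(T ^^ i) -` B \<inter> space M \<in> sets M \<and> measure M ((T ^^ i) -` B \<inter> space M) = measure M B"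
proof (induction i)
  case 0
  show ?case
    using assms(2) sets.sets_into_space[OF assms(2)] by (simp add: Int_absorb2)
next
  case (Suc i)
  have T: "T \<in> measurable M M"
    and preserving: "\<And>A. A \<in> sets M \<Longrightarrow> emeasure M (T -` A \<inter> space M) = emeasure M A"
    using assms(1) by (simp_all add: measure_preserving_def)
  have preimage: "(T ^^ Suc i) -` B \<inter> space M = T -` ((T ^^ i) -` B \<inter> space M) \<inter> space M"
    using measurable_space[OF T] by (auto simp: funpow_Suc_right simp del: funpow.simps)
  define A where "A = (T ^^ i) -` B \<inter> space M"
  have "A \<in> sets M" and "measure M A = measure M B"
    using Suc by (simp_all add: A_def)
  then show ?case
    unfolding preimage A_def[symmetric] using measurable_sets[OF T] preserving
    by (simp add: measure_def)
qed

lemma measure_le_of_bounded_visits: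
  assumes "measure_preserving M T" and B: "B \<in> sets M"
    and visits: "\<And>\<omega>. \<omega> \<in> space M \<Longrightarrow> card {i \<in> {..<R}. (T ^^ i) \<omega> \<in> B} \<le> b"
  shows "real R * measure M B \<le> b"
proof -
  interpret prob_space M
    using assms(1) by (simp add: measure_preserving_def)
  define B' where "B' i = (T ^^ i) -` B \<inter> space M" for i
  have B'_sets: "B' i \<in> sets M" and prob_B': "prob (B' i) = prob B" for i
    using measure_preserving_funpow[OF assms(1,2), of i] by (simp_all add: B'_def)
  have "real R * prob B = (\<Sum>i<R. prob (B' i))"
    by (simp add: prob_B')
  also have "\<dots> = (\<Sum>i<R. \<integral>\<omega>. indicator (B' i) \<omega> \<partial>M)"
    by (simp add: B'_sets)
  also have "\<dots> = (\<integral>\<omega>. (\<Sum>i<R. indicator (B' i) \<omega>) \<partial>M)"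
    using B'_sets
    by (intro Bochner_Integration.integral_sum[symmetric] integrable_real_indicator)
      (auto simp: less_top[symmetric])
  also have "\<dots> \<le> (\<integral>\<omega>. real b \<partial>M)"
  proof (rule integral_mono)
    show "integrable M (\<lambda>\<omega>. \<Sum>i<R. indicator (B' i) \<omega> :: real)"
      using B'_sets
      by (intro Bochner_Integration.integrable_sum integrable_real_indicator)
        (auto simp: less_top[symmetric])
    show "(\<Sum>i<R. indicator (B' i) \<omega>) \<le> real b" if "\<omega> \<in> space M" for \<omega>
    proof -
      have "(\<Sum>i<R. indicator (B' i) \<omega> :: real) = real (card {i \<in> {..<R}. (T ^^ i) \<omega> \<in> B})"
        using that by (simp add: B'_def indicator_def sum.If_cases Int_def)
      with visits[OF that] show ?thesis
        by simp
    qed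
  qed simp
  finally show ?thesis
    by (simp add: prob_space)
qed

lemma (in prob_space) prob_frequently_ge:
  assumes meas: "\<And>k. {\<omega> \<in> space M. P k \<omega>} \<in> events"
    and freq: "\<exists>\<^sub>F k in sequentially. c \<le> \<P>(\<omega> in M. P k \<omega>)"
  shows "c \<le> \<P>(\<omega> in M. \<exists>\<^sub>F k in sequentially. P k \<omega>)"
proof -
  define A where "A K = {\<omega> \<in> space M. \<exists>k\<ge>K. P k \<omega>}" for K
  have "A K = (\<Union>k\<in>{K..}. {\<omega> \<in> space M. P k \<omega>})" for K
    by (auto simp: A_def)
  then have A_sets: "A K \<in> events" for K
    using meas by auto
  have "c \<le> prob (A K)" for K
  proof -
    obtain k where "K \<le> k" "c \<le> \<P>(\<omega> in M. P k \<omega>)"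
      using freq by (auto simp: frequently_sequentially)
    moreover have "{\<omega> \<in> space M. P k \<omega>} \<subseteq> A K"
      using \<open>K \<le> k\<close> by (auto simp: A_def)
    then have "\<P>(\<omega> in M. P k \<omega>) \<le> prob (A K)"
      by (rule finite_measure_mono[OF _ A_sets])
    ultimately show ?thesis
      by linarith
  qed
  moreover have "decseq A"
    unfolding decseq_def A_def by (auto intro: order_trans)
  then have "(\<lambda>K. prob (A K)) \<longlonglongrightarrow> prob (\<Inter>K. A K)"
    using A_sets by (intro finite_Lim_measure_decseq) auto
  ultimately have "c \<le> prob (\<Inter>K. A K)"
    by (intro LIMSEQ_le_const) auto
  moreover have "(\<Inter>K. A K) = {\<omega> \<in> space M. \<exists>\<^sub>F k in sequentially. P k \<omega>}"
    by (auto simp: A_def frequently_sequentially)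
  ultimately show ?thesis
    by simp
qed

text \<open>The set of points whose orbit meets \<open>limsup\<^sub>k {P k}\<close> is invariant and has probability at
  least \<open>c\<close>.\<close>

lemma ergodic_AE_frequently_on_orbit:
  fixes \<phi> :: "int \<Rightarrow> 'a \<Rightarrow> 'a" and P :: "nat \<Rightarrow> 'a \<Rightarrow> bool"
  assumes erg: "ergodic_measure M (\<phi> 1)"
    and flow: "\<And>i j \<omega>. \<phi> i (\<phi> j \<omega>) = \<phi> (i + j) \<omega>" and flow_0: "\<And>\<omega>. \<phi> 0 \<omega> = \<omega>"
    and closed: "\<And>j \<omega>. \<omega> \<in> space M \<Longrightarrow> \<phi> j \<omega> \<in> space M"
    and meas: "\<And>k j. {\<omega> \<in> space M. P k (\<phi> j \<omega>)} \<in> sets M"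
    and "0 < c" and freq: "\<exists>\<^sub>F k in sequentially. c \<le> \<P>(\<omega> in M. P k \<omega>)"
  shows "AE \<omega> in M. \<exists>j. \<exists>\<^sub>F k in sequentially. P k (\<phi> j \<omega>)"
proof -
  interpret prob_space M
    using erg by (simp add: ergodic_measure_def)
  define U where "U = {\<omega> \<in> space M. \<exists>j. \<exists>\<^sub>F k in sequentially. P k (\<phi> j \<omega>)}"
  have "U = (\<Union>j. \<Inter>K. \<Union>k\<in>{K..}. {\<omega> \<in> space M. P k (\<phi> j \<omega>)})"
    by (simp add: U_def frequently_sequentially set_eq_iff Bex_def)
  then have U_sets: "U \<in> sets M"
    using meas by (auto intro!: sets.countable_UN sets.countable_INT)
  have "c \<le> \<P>(\<omega> in M. \<exists>\<^sub>F k in sequentially. P k \<omega>)"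
    using meas[of _ 0] freq by (intro prob_frequently_ge) (simp_all add: flow_0)
  also have "\<dots> \<le> prob U"
    by (rule finite_measure_mono[OF _ U_sets]) (auto simp: U_def flow_0 intro: exI[of _ 0])
  finally have "c \<le> prob U" .
  moreover have "\<phi> 1 -` U \<inter> space M = U"
  proof (intro equalityI subsetI)
    fix \<omega>
    assume "\<omega> \<in> \<phi> 1 -` U \<inter> space M"
    then obtain j where "\<omega> \<in> space M" "\<exists>\<^sub>F k in sequentially. P k (\<phi> j (\<phi> 1 \<omega>))"
      by (auto simp: U_def)
    then show "\<omega> \<in> U"
      by (auto simp: U_def flow)
  next
    fix \<omega>
    assume "\<omega> \<in> U"
    then obtain j where "\<omega> \<in> space M" "\<exists>\<^sub>F k in sequentially. P k (\<phi> j \<omega>)"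
      by (auto simp: U_def)
    moreover have "\<phi> (j - 1) (\<phi> 1 \<omega>) = \<phi> j \<omega>"
      by (simp add: flow)
    ultimately show "\<omega> \<in> \<phi> 1 -` U \<inter> space M"
      by (auto simp: U_def closed intro!: exI[of _ "j - 1"])
  qed
  ultimately have "emeasure M U = 1"
    using erg U_sets \<open>0 < c\<close> unfolding ergodic_measure_def by (auto simp: emeasure_eq_measure)
  then have "AE \<omega> in M. \<omega> \<in> U"
    using U_sets by (simp add: prob_eq_1 emeasure_eq_measure)
  then show ?thesis
    by (rule AE_mp) (simp add: U_def)
qed

section \<open>Sturmian potentials\<close>

lemma sliding_block_no_eigenvalue:
  fixes x :: "int \<Rightarrow> 'a" and x' :: "int \<Rightarrow> 'b" and G :: "'a list \<Rightarrow> (int \<Rightarrow> 'b) \<Rightarrow> real"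
  assumes "0 < P" and "\<forall>m. x' (m + int P) = x' m"
    and windows: "\<forall>N. \<exists>q\<ge>N. gordon_window x q P n k"
  shows "\<not> has_eigenvalue (\<lambda>j. G (map (\<lambda>i. x (n + int i + j)) [0..<k]) (shiftZ j x'))"
proof -
  define V where "V = (\<lambda>j. G (map (\<lambda>i. x (n + int i + j)) [0..<k]) (shiftZ j x'))"
  have "\<exists>\<^sub>F Q in sequentially.
      periodic_on V (int Q) {- int Q..<int Q} \<or> periodic_on V (int Q) {- 2 * int Q..<0}"
    unfolding frequently_sequentially
  proof
    fix N
    obtain q where "int N \<le> q" and "gordon_window x q P n k"
      using windows by blast
    moreover have "q \<le> int P * q"
      using \<open>int N \<le> q\<close> \<open>0 < P\<close> by (simp add: mult_le_cancel_right1)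
    ultimately show "\<exists>Q\<ge>N.
        periodic_on V (int Q) {- int Q..<int Q} \<or> periodic_on V (int Q) {- 2 * int Q..<0}"
      using gordon_window_sliding_block[of x q P n k x' G] assms(1,2)
      by (intro exI[of _ "nat (int P * q)"]) (auto simp: V_def mult.assoc)
  qed
  then show ?thesis
    unfolding V_def by (rule gordon_no_eigenvalue)
qed

lemma local_function_along_orbit:
  assumes "\<forall>x\<in>X. \<forall>x'\<in>Y. f (x, x') = g (map (\<lambda>i. x (n + int i)) [0..<k]) x'"
    and "\<And>x j. x \<in> X \<Longrightarrow> shiftZ j x \<in> X" and "\<And>x j. x \<in> Y \<Longrightarrow> shiftZ j x \<in> Y"
    and "\<omega> \<in> X \<times> Y"
  shows "f (prodshift j \<omega>) = g (map (\<lambda>i. fst \<omega> (n + int i + j)) [0..<k]) (shiftZ j (snd \<omega>))"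
  using assms by (cases \<omega>) (simp add: prodshift_def shiftZ_def add.assoc)

lemma sturmian_potential_no_eigenvalue:
  fixes f :: "(int \<Rightarrow> nat) \<times> (int \<Rightarrow> 'b) \<Rightarrow> real"
  assumes "\<forall>x\<in>sturmian_subshift \<alpha>. \<forall>x'\<in>orbit_subshift y.
      f (x, x') = g (map (\<lambda>i. x (n + int i)) [0..<k]) x'"
    and "0 < p" and "\<forall>m. y (m + int p) = y m"
    and "\<omega> \<in> sturmian_subshift \<alpha> \<times> orbit_subshift y"
    and "\<forall>N. \<exists>q\<ge>N. gordon_window (fst \<omega>) q p n k"
  shows "\<not> has_eigenvalue (\<lambda>j. f (prodshift j \<omega>))"
proof -
  have "(\<lambda>j. f (prodshift j \<omega>)) =
      (\<lambda>j. g (map (\<lambda>i. fst \<omega> (n + int i + j)) [0..<k]) (shiftZ j (snd \<omega>)))"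
    using local_function_along_orbit[OF assms(1) _ _ assms(4)]
      sturmian_subshift_shiftZ orbit_subshift_shiftZ by blast
  moreover have "\<forall>m. snd \<omega> (m + int p) = snd \<omega> m"
    using orbit_subshift_periodic[OF assms(3)] assms(4) by auto
  ultimately show ?thesis
    using sliding_block_no_eigenvalue[OF assms(2) _ assms(5)] by simp
qed

lemma frequently_ge_of_limsup_ge:
  fixes c :: "nat \<Rightarrow> nat"
  assumes "ereal (real M) \<le> limsup (\<lambda>n. ereal (real (c n)))" and "0 < M"
  shows "\<exists>\<^sub>F n in sequentially. M \<le> c n"
proof (rule ccontr)
  assume "\<not> (\<exists>\<^sub>F n in sequentially. M \<le> c n)"
  then have "\<forall>\<^sub>F n in sequentially. ereal (real (c n)) \<le> ereal (real (M - 1))"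
    unfolding not_frequently by (rule eventually_mono) simp
  then have "limsup (\<lambda>n. ereal (real (c n))) \<le> ereal (real (M - 1))"
    by (rule Limsup_bounded)
  with assms(1) have "ereal (real M) \<le> ereal (real (M - 1))"
    by (rule order_trans)
  with assms(2) show False
    by simp
qed

lemma space_eq_restrict_seq_pair_space:
  fixes M :: "((int \<Rightarrow> nat) \<times> (int \<Rightarrow> 'b)) measure"
  assumes "sets M = sets (restrict_space seq_pair_space S)"
  shows "space M = S"
  using sets_eq_imp_space_eq[OF assms]
  by (simp add: space_restrict_space seq_pair_space_def space_pair_measure space_PiM)

lemma pred_fst_coordinate_eq:
  fixes M :: "((int \<Rightarrow> nat) \<times> (int \<Rightarrow> 'b)) measure"
  assumes "sets M = sets (restrict_space seq_pair_space S)"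
  shows "Measurable.pred M (\<lambda>\<omega>. fst \<omega> a = fst \<omega> b)"
proof -
  have "(\<lambda>\<omega>. fst \<omega> m) \<in> measurable (seq_pair_space :: ((int \<Rightarrow> nat) \<times> (int \<Rightarrow> 'b)) measure)
      (count_space UNIV)" for m
    unfolding seq_pair_space_def by measurable
  then have "(\<lambda>\<omega>. fst \<omega> m) \<in> measurable M (count_space UNIV)" for m
    using measurable_restrict_space1 measurable_cong_sets[OF assms refl] by blast
  then have "Measurable.pred M (\<lambda>\<omega>. \<exists>v. fst \<omega> a = v \<and> fst \<omega> b = v)"
    by (intro pred_intros_countable(2) pred_intros_logic(3) pred_count_space_const1)
  then show ?thesis
    by (simp add: eq_commute)
qed

lemma pred_gordon_window_prodshift:
  fixes M :: "((int \<Rightarrow> nat) \<times> (int \<Rightarrow> 'b)) measure"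
  assumes "sets M = sets (restrict_space seq_pair_space S)"
  shows "Measurable.pred M (\<lambda>\<omega>. gordon_window (fst (prodshift j \<omega>)) q P n k)"
proof -
  note [measurable] = pred_fst_coordinate_eq[OF assms]
  show ?thesis
    unfolding gordon_window_def periodic_on_def prodshift_def shiftZ_def fst_conv by measurable
qed

lemma sturmian_card_shifts_without_gordon_window:
  assumes "0 < \<alpha>" and "\<alpha> < 1" and "\<alpha> \<notin> \<rat>" and "x \<in> sturmian_subshift \<alpha>"
    and "0 < P" and "4 * P \<le> cf_digit \<alpha> k" and "2 * int k0 + 8 \<le> cf_den \<alpha> k"
  shows "card {i \<in> {..<nat (2 * int P * cf_den \<alpha> k)}. \<not> gordon_window (shiftZ (int i) x) (cf_den \<alpha> k) P n k0}
    \<le> nat (2 * int P * cf_den \<alpha> k - cf_den \<alpha> k + int k0 + 4)"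
  using card_shifts_without_gordon_window[of P k0 "cf_den \<alpha> k" x n] assms(5,7)
    sturmian_defects_sparse[OF assms(1-4,6)]
  by (simp add: le_nat_iff)

lemma sturmian_gordon_window_prob:
  fixes M :: "((int \<Rightarrow> nat) \<times> (int \<Rightarrow> 'b)) measure"
  assumes "0 < \<alpha>" and "\<alpha> < 1" and "\<alpha> \<notin> \<rat>"
    and mp: "measure_preserving M (prodshift 1)"
    and sturmian: "\<And>\<omega>. \<omega> \<in> space M \<Longrightarrow> fst \<omega> \<in> sturmian_subshift \<alpha>"
    and meas: "Measurable.pred M (\<lambda>\<omega>. gordon_window (fst \<omega>) (cf_den \<alpha> k) P n k0)"
    and "0 < P" and digit: "4 * P \<le> cf_digit \<alpha> k" and den: "2 * int k0 + 8 \<le> cf_den \<alpha> k"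
  shows "1 / (4 * P) \<le> \<P>(\<omega> in M. gordon_window (fst \<omega>) (cf_den \<alpha> k) P n k0)"
proof -
  interpret prob_space M
    using mp by (simp add: measure_preserving_def)
  define q where "q = cf_den \<alpha> k"
  define B where "B = {\<omega> \<in> space M. \<not> gordon_window (fst \<omega>) q P n k0}"
  have "B \<in> sets M"
    using meas unfolding B_def q_def by measurable
  have "real (nat (2 * int P * q)) * prob B \<le> real (nat (2 * int P * q - q + int k0 + 4))"
  proof (rule measure_le_of_bounded_visits[OF mp \<open>B \<in> sets M\<close>])
    fix \<omega>
    assume "\<omega> \<in> space M"
    then have "(prodshift 1 ^^ i) \<omega> \<in> space M" for i
      using mp by (induction i) (auto simp: measure_preserving_def intro: measurable_space)
    then have "{i \<in> {..<nat (2 * int P * q)}. (prodshift 1 ^^ i) \<omega> \<in> B}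
        = {i \<in> {..<nat (2 * int P * q)}. \<not> gordon_window (shiftZ (int i) (fst \<omega>)) q P n k0}"
      by (auto simp: B_def funpow_prodshift_1 prodshift_def)
    with sturmian_card_shifts_without_gordon_window[OF assms(1-3) sturmian[OF \<open>\<omega> \<in> space M\<close>]
        \<open>0 < P\<close> digit den]
    show "card {i \<in> {..<nat (2 * int P * q)}. (prodshift 1 ^^ i) \<omega> \<in> B}
        \<le> nat (2 * int P * q - q + int k0 + 4)"
      by (simp add: q_def)
  qed
  moreover have "q \<le> int P * q"
    using \<open>0 < P\<close> den by (simp add: q_def mult_le_cancel_right1)
  ultimately have "2 * real P * q * prob B \<le> 2 * real P * q - q + k0 + 4"
    using den by (simp add: q_def of_nat_nat)
  then have "q * (1 / 2) \<le> q * (2 * real P * (1 - prob B))"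
    using den by (simp add: q_def algebra_simps)
  then have "1 / 2 \<le> 2 * real P * (1 - prob B)"
    using den by (simp add: q_def mult_le_cancel_left_pos)
  then have "1 / (4 * real P) \<le> 1 - prob B"
    using \<open>0 < P\<close> by (simp add: field_simps)
  also have "\<dots> = \<P>(\<omega> in M. gordon_window (fst \<omega>) (cf_den \<alpha> k) P n k0)"
  proof -
    have "space M - B = {\<omega> \<in> space M. gordon_window (fst \<omega>) (cf_den \<alpha> k) P n k0}"
      by (auto simp: B_def q_def)
    with prob_compl[OF \<open>B \<in> sets M\<close>] show ?thesis
      by simp
  qed
  finally show ?thesis .
qed

text \<open>At the scale \<open>q\<^sub>i\<close> the point \<open>\<omega>\<close> has the window required by Gordon's lemma, and
  \<open>i\<close> is one of the scales at which the window has probability at least \<open>1 / (4 P)\<close>.\<close>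

definition gordon_scale :: "real \<Rightarrow> nat \<Rightarrow> int \<Rightarrow> nat \<Rightarrow> nat \<Rightarrow> (int \<Rightarrow> 'a) \<times> 'b \<Rightarrow> bool" where
  "gordon_scale \<alpha> P n k i \<omega> \<longleftrightarrow> 4 * P \<le> cf_digit \<alpha> i \<and> 2 * int k + 8 \<le> cf_den \<alpha> i
     \<and> gordon_window (fst \<omega>) (cf_den \<alpha> i) P n k"

lemma frequently_prob_gordon_scale:
  fixes M :: "((int \<Rightarrow> nat) \<times> (int \<Rightarrow> 'b)) measure"
  assumes "0 < \<alpha>" and "\<alpha> < 1" and "\<alpha> \<notin> \<rat>"
    and sets: "sets M = sets (restrict_space seq_pair_space (sturmian_subshift \<alpha> \<times> Y))"
    and mp: "measure_preserving M (prodshift 1)"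
    and "0 < P" and "ereal (real (4 * P)) \<le> limsup (\<lambda>i. ereal (real (cf_digit \<alpha> i)))"
  shows "\<exists>\<^sub>F i in sequentially. 1 / (4 * real P) \<le> \<P>(\<omega> in M. gordon_scale \<alpha> P n k i \<omega>)"
proof -
  have "\<exists>\<^sub>F i in sequentially. 4 * P \<le> cf_digit \<alpha> i"
    using frequently_ge_of_limsup_ge assms(6,7) by simp
  moreover have "\<forall>\<^sub>F i in sequentially. 2 * int k + 8 \<le> cf_den \<alpha> i"
  proof (rule eventually_sequentiallyI)
    fix i
    assume "2 * k + 8 \<le> i"
    with cf_den_ge[OF assms(1-3), of i] show "2 * int k + 8 \<le> cf_den \<alpha> i"
      by linarith
  qed
  ultimately show ?thesis
  proof (rule frequently_eventually_frequently[THEN frequently_elim1])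
    fix i
    assume "4 * P \<le> cf_digit \<alpha> i \<and> 2 * int k + 8 \<le> cf_den \<alpha> i"
    then show "1 / (4 * real P) \<le> \<P>(\<omega> in M. gordon_scale \<alpha> P n k i \<omega>)"
      using sturmian_gordon_window_prob[OF assms(1-3) mp _
          pred_gordon_window_prodshift[OF sets, of 0, unfolded prodshift_0] \<open>0 < P\<close>]
      by (auto simp: gordon_scale_def space_eq_restrict_seq_pair_space[OF sets] mem_Times_iff)
  qed
qed

lemma sturmian_AE_frequent_gordon_windows:
  fixes M :: "((int \<Rightarrow> nat) \<times> (int \<Rightarrow> 'b)) measure"
  assumes "0 < \<alpha>" and "\<alpha> < 1" and "\<alpha> \<notin> \<rat>"
    and sets: "sets M = sets (restrict_space seq_pair_space (sturmian_subshift \<alpha> \<times> Y))"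
    and Y: "\<And>x j. x \<in> Y \<Longrightarrow> shiftZ j x \<in> Y"
    and erg: "ergodic_measure M (prodshift 1)"
    and "0 < P" and "ereal (real (4 * P)) \<le> limsup (\<lambda>i. ereal (real (cf_digit \<alpha> i)))"
  shows "AE \<omega> in M. \<exists>j. \<forall>N. \<exists>q\<ge>N. gordon_window (fst (prodshift j \<omega>)) q P n k"
proof -
  have "AE \<omega> in M. \<exists>j. \<exists>\<^sub>F i in sequentially. gordon_scale \<alpha> P n k i (prodshift j \<omega>)"
  proof (rule ergodic_AE_frequently_on_orbit[OF erg prodshift_prodshift prodshift_0])
    show "prodshift j \<omega> \<in> space M" if "\<omega> \<in> space M" for j \<omega>
      using that unfolding space_eq_restrict_seq_pair_space[OF sets]
      by (simp add: prodshift_def mem_Times_iff sturmian_subshift_shiftZ Y)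
    show "{\<omega> \<in> space M. gordon_scale \<alpha> P n k i (prodshift j \<omega>)} \<in> sets M" for i j
      using pred_gordon_window_prodshift[OF sets] unfolding gordon_scale_def by measurable
    show "0 < 1 / (4 * real P)"
      using \<open>0 < P\<close> by simp
    show "\<exists>\<^sub>F i in sequentially. 1 / (4 * real P) \<le> \<P>(\<omega> in M. gordon_scale \<alpha> P n k i \<omega>)"
      using measure_preserving_if_ergodic[OF erg]
      by (rule frequently_prob_gordon_scale[OF assms(1-4) _ assms(7,8)])
  qed
  then show ?thesis
  proof (rule AE_mp, intro AE_I2 impI)
    fix \<omega>
    assume "\<exists>j. \<exists>\<^sub>F i in sequentially. gordon_scale \<alpha> P n k i (prodshift j \<omega>)"
    then obtain j where j: "\<exists>\<^sub>F i in sequentially. gordon_scale \<alpha> P n k i (prodshift j \<omega>)"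
      by blast
    have "\<exists>q\<ge>N. gordon_window (fst (prodshift j \<omega>)) q P n k" for N
    proof -
      obtain i where "nat N \<le> i" and "gordon_scale \<alpha> P n k i (prodshift j \<omega>)"
        using j unfolding frequently_sequentially by blast
      moreover have "N \<le> cf_den \<alpha> i"
        using \<open>nat N \<le> i\<close> cf_den_ge[OF assms(1-3), of i] by linarith
      ultimately show ?thesis
        unfolding gordon_scale_def by blast
    qed
    then show "\<exists>j. \<forall>N. \<exists>q\<ge>N. gordon_window (fst (prodshift j \<omega>)) q P n k"
      by blast
  qed
qed

theorem proposition3p45:
  fixes \<alpha> :: real and p :: nat and y :: "int \<Rightarrow> 'b::finite"
    and \<rho> :: "((int \<Rightarrow> nat) \<times> (int \<Rightarrow> 'b)) measure"
    and f :: "(int \<Rightarrow> nat) \<times> (int \<Rightarrow> 'b) \<Rightarrow> real"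
  assumes "0 < \<alpha>" "\<alpha> < 1" "\<alpha> \<notin> \<rat>"
    and "p > 0" "\<forall>n. y (n + int p) = y n"
    and "sets \<rho> = sets (restrict_space seq_pair_space
                      (sturmian_subshift \<alpha> \<times> orbit_subshift y))"
    and "ergodic_measure \<rho> (prodshift 1)"
    and "\<exists>(n::int) (k::nat) (g :: nat list \<Rightarrow> (int \<Rightarrow> 'b) \<Rightarrow> real).
           \<forall>x \<in> sturmian_subshift \<alpha>. \<forall>x' \<in> orbit_subshift y.
             f (x, x') = g (map (\<lambda>i. x (n + int i)) [0..<k]) x'"
    and "limsup (\<lambda>n. ereal (real (cf_digit \<alpha> n))) \<ge> ereal (real (4 * p))"
  shows "AE \<omega> in \<rho>. \<not> has_eigenvalue (\<lambda>j. f (prodshift j \<omega>))"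
proof -
  obtain n k g where local: "\<forall>x \<in> sturmian_subshift \<alpha>. \<forall>x' \<in> orbit_subshift y.
      f (x, x') = g (map (\<lambda>i. x (n + int i)) [0..<k]) x'"
    using assms(8) by blast
  have "AE \<omega> in \<rho>. \<exists>j. \<forall>N. \<exists>q\<ge>N. gordon_window (fst (prodshift j \<omega>)) q p n k"
    using sturmian_AE_frequent_gordon_windows[OF assms(1-3,6) orbit_subshift_shiftZ assms(7,4,9)] .
  then show ?thesis
  proof (rule AE_mp, intro AE_I2 impI notI)
    fix \<omega>
    assume "\<omega> \<in> space \<rho>" and "\<exists>j. \<forall>N. \<exists>q\<ge>N. gordon_window (fst (prodshift j \<omega>)) q p n k"
      and eigenvalue: "has_eigenvalue (\<lambda>j. f (prodshift j \<omega>))"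
    then obtain j where windows: "\<forall>N. \<exists>q\<ge>N. gordon_window (fst (prodshift j \<omega>)) q p n k"
      by blast
    have "\<omega> \<in> sturmian_subshift \<alpha> \<times> orbit_subshift y"
      using \<open>\<omega> \<in> space \<rho>\<close> space_eq_restrict_seq_pair_space[OF assms(6)] by simp
    then have "prodshift j \<omega> \<in> sturmian_subshift \<alpha> \<times> orbit_subshift y"
      by (simp add: prodshift_def mem_Times_iff sturmian_subshift_shiftZ orbit_subshift_shiftZ)
    from sturmian_potential_no_eigenvalue[OF local assms(4,5) this windows]
    have "\<not> has_eigenvalue (\<lambda>i. f (prodshift (i + j) \<omega>))"
      by (simp add: prodshift_prodshift)
    with has_eigenvalue_shift[OF eigenvalue, of j] show False
      by simp
  qed
qed

end
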